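(* Let $c>0$, $k>0$ and $v\in\mathbb{R}^d$. Let $\xi$ be a zero-mean random vector in $\mathbb{R}^d$ with density $p$ and variance $\sigma_\xi^2=\mathbb{E}\|\xi\|^2<\infty$, let $\zeta\sim\mathcal N(0,I)$ be independent of $\xi$, and let $g=\mathrm{clip}(v+\xi+k\zeta,c)$. Then $$\mathbb{E}_{\xi\sim p,\zeta}[\langle v,g\rangle]\ge\|v\|\min\left\{\|v\|,\frac34c\right\}\mathbb{P}\left(\|k\zeta\|<\frac c4\right)-O\!\left(\frac{\sigma_\xi^2}{k^2}\right),$$ where the implied constant in $O(\cdot)$ does not depend on $k$ or on the distribution of $\xi$.
   Context: For $g\in\mathbb{R}^d$ and $c>0$, $\mathrm{clip}(g,c)=g\cdot\min\left(1,\frac{c}{\|g\|}\right)$ (with $\mathrm{clip}(0,c)=0$). In the paper $v=\nabla f(x_t)$ is the true gradient and $\xi=\xi_t$ the gradient noise; Gaussian noise $k\zeta$ is added before clipping. *)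

theory Defs
  imports "HOL-Probability.Probability"
begin

definition clip :: "'a::real_normed_vector \<Rightarrow> real \<Rightarrow> 'a" where
  "clip g c = (if g = 0 then 0 else min 1 (c / norm g) *\<^sub>R g)"

definition std_gauss_density :: "'a::euclidean_space \<Rightarrow> real" where
  "std_gauss_density x = (2 * pi) powr (- real DIM('a) / 2) * exp (- (norm x)\<^sup>2 / 2)"

definition std_gauss :: "'a::euclidean_space measure" where
  "std_gauss = density lborel (\<lambda>x. ennreal (std_gauss_density x))"

definition zero_mean_finite_var_density :: "('a::euclidean_space \<Rightarrow> real) \<Rightarrow> bool" where
  "zero_mean_finite_var_density p \<longleftrightarrow>
     p \<in> borel_measurable borel \<and> (\<forall>x. 0 \<le> p x) \<and>
     (\<integral>\<^sup>+ x. ennreal (p x) \<partial>lborel) = 1 \<and>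
     integrable (density lborel (\<lambda>x. ennreal (p x))) (\<lambda>x. x) \<and>
     (\<integral> x. x \<partial>density lborel (\<lambda>x. ennreal (p x))) = 0 \<and>
     integrable (density lborel (\<lambda>x. ennreal (p x))) (\<lambda>x. (norm x)\<^sup>2)"

end

theory Submission
  imports Defs
begin

text \<open>
  Write H x for the Gaussian average of \<langle>v, clip (v + x + k z) c\<rangle>; by Fubini the left-hand
  side is the average of H over the noise. Pairing z with -z, and using that clipping (the
  projection onto a ball) is a monotone operator, gives H 0 \<ge> |v| min |v| (3c/4) P(|k z| < c/4).
  By the Cameron--Martin formula H is the Gaussian smoothing of a function bounded by |v| c, so
  it has a second-order minorant H x \<ge> H 0 + \<langle>a, x\<rangle> - C |x|^2 / k^2 with C independent of k
  and of the noise; integrating against zero-mean noise removes the linear term.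
\<close>

section \<open>Clipping\<close>

lemma clip_eq_scaleR: "clip g c = min 1 (c / norm g) *\<^sub>R g"
  by (simp add: clip_def)

lemma clip_uminus: "clip (- g) c = - clip g c"
  by (simp add: clip_def)

lemma clip_measurable [measurable]: "(\<lambda>g::'a::euclidean_space. clip g c) \<in> borel_measurable borel"
  unfolding clip_eq_scaleR by measurable

lemma norm_clip: "c > 0 \<Longrightarrow> norm (clip g c) = min (norm g) c"
  by (cases "g = 0") (auto simp: clip_def min_def field_simps)

lemma abs_inner_clip_le: "c > 0 \<Longrightarrow> \<bar>inner v (clip g c)\<bar> \<le> norm v * c"
  by (metis Cauchy_Schwarz_ineq2 min.cobounded2 mult_left_mono norm_clip norm_ge_zero order_trans)

lemma inner_diff_clip_nonneg:
  assumes "c > 0"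
  shows "0 \<le> inner (clip a c - clip b c) (a - b)"
proof -
  define \<alpha> \<beta> where "\<alpha> = min 1 (c / norm a)" and "\<beta> = min 1 (c / norm b)"
  have "0 \<le> \<alpha>" "0 \<le> \<beta>"
    using assms by (auto simp: \<alpha>_def \<beta>_def)
  have "\<alpha> * norm a = min (norm a) c" "\<beta> * norm b = min (norm b) c"
    using norm_clip[OF assms, of a] norm_clip[OF assms, of b] \<open>0 \<le> \<alpha>\<close> \<open>0 \<le> \<beta>\<close>
    by (simp_all add: clip_eq_scaleR \<alpha>_def[symmetric] \<beta>_def[symmetric])
  then have "0 \<le> (\<alpha> * norm a - \<beta> * norm b) * (norm a - norm b)"
    by (cases "norm a \<le> norm b") (auto simp: min_def intro: mult_nonneg_nonneg mult_nonpos_nonpos)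
  also have "\<dots> = \<alpha> * (norm a)\<^sup>2 + \<beta> * (norm b)\<^sup>2 - (\<alpha> + \<beta>) * (norm a * norm b)"
    by (simp add: algebra_simps power2_eq_square)
  also have "\<dots> \<le> \<alpha> * (norm a)\<^sup>2 + \<beta> * (norm b)\<^sup>2 - (\<alpha> + \<beta>) * inner a b"
    using norm_cauchy_schwarz[of a b] \<open>0 \<le> \<alpha>\<close> \<open>0 \<le> \<beta>\<close> by (simp add: mult_left_mono)
  also have "\<dots> = inner (clip a c - clip b c) (a - b)"
    by (simp add: clip_eq_scaleR \<alpha>_def[symmetric] \<beta>_def[symmetric] power2_norm_eq_inner inner_commute algebra_simps)
  finally show ?thesis .
qed

lemma inner_clip_add_diff_nonneg:
  assumes "c > 0"
  shows "0 \<le> inner v (clip (v + w) c) + inner v (clip (v - w) c)"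
proof -
  have "inner v (clip (v + w) c) + inner v (clip (v - w) c)
      = inner (clip (v + w) c - clip (w - v) c) ((v + w) - (w - v)) / 2"
    using clip_uminus[of "w - v" c]
    by (simp add: inner_diff_left inner_diff_right inner_add_right inner_commute algebra_simps)
  then show ?thesis
    using inner_diff_clip_nonneg[OF assms, of "v + w" "w - v"] by simp
qed

lemma clip_gain_ineq:
  fixes c r t q :: real
  assumes "c > 0" and "3 / 4 * c < r" and "0 \<le> t" and "t < c / 4" and "\<bar>q\<bar> \<le> r * t"
  shows "(r + t) * (3 / 4 * c * r + q) \<le> c * (r\<^sup>2 + q)"
proof -
  define A B where "A = r * (c * r / 4 - 3 / 4 * c * t)" and "B = c - r - t"
  \<comment> \<open>The gap is affine in q, so it suffices to check the two endpoints q = r t and q = - r t.\<close>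
  have "A + r * t * B = r * (c / 4 - t) * (r + t)"
    by (simp add: A_def B_def field_simps)
  then have upper: "0 \<le> A + r * t * B"
    using assms by simp
  have "A - r * t * B = r * ((3 / 4 * c - t) * (c / 4 - t) + (r - 3 / 4 * c) * (c / 4 + t))"
    by (simp add: A_def B_def field_simps)
  then have lower: "0 \<le> A - r * t * B"
    using assms by simp
  have "0 \<le> A + q * B"
  proof (cases "0 \<le> B")
    case True
    then have "- (r * t) * B \<le> q * B"
      using assms(5) by (intro mult_right_mono) auto
    then show ?thesis
      using lower by simp
  next
    case False
    then have "r * t * B \<le> q * B"
      using assms(5) by (intro mult_right_mono_neg) auto
    then show ?thesis
      using upper by simp
  qed
  moreover have "c * (r\<^sup>2 + q) - (r + t) * (3 / 4 * c * r + q) = A + q * B"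
    by (simp add: A_def B_def field_simps power2_eq_square)
  ultimately show ?thesis
    by linarith
qed

lemma inner_clip_add_ge_outside_ball:
  assumes "c > 0" and "norm w < c / 4" and "c < norm (v + w)"
  shows "3 / 4 * c * norm v + inner v w \<le> inner v (clip (v + w) c)"
proof -
  define r q t X where "r = norm v" and "q = inner v w" and "t = norm w" and "X = norm (v + w)"
  have "X \<le> r + t" "\<bar>q\<bar> \<le> r * t" "0 \<le> t" "t < c / 4" "c < X"
    using assms norm_triangle_ineq[of v w] Cauchy_Schwarz_ineq2[of v w]
    by (simp_all add: r_def q_def t_def X_def)
  then have "3 / 4 * c < r" "0 < r + t"
    by linarith+
  have "0 \<le> r * (r - t)"
    using \<open>3 / 4 * c < r\<close> \<open>t < c / 4\<close> \<open>0 \<le> t\<close> by simp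
  then have "0 \<le> r\<^sup>2 + q"
    using \<open>\<bar>q\<bar> \<le> r * t\<close> by (simp add: power2_eq_square algebra_simps)
  have "3 / 4 * c * r + q \<le> c / (r + t) * (r\<^sup>2 + q)"
    using clip_gain_ineq[OF assms(1) \<open>3 / 4 * c < r\<close> \<open>0 \<le> t\<close> \<open>t < c / 4\<close> \<open>\<bar>q\<bar> \<le> r * t\<close>]
      \<open>0 < r + t\<close>
    by (simp add: field_simps)
  also have "\<dots> \<le> c / X * (r\<^sup>2 + q)"
    using \<open>X \<le> r + t\<close> \<open>c < X\<close> \<open>0 \<le> r\<^sup>2 + q\<close> assms(1)
    by (intro mult_right_mono divide_left_mono) auto
  also have "\<dots> = inner v (clip (v + w) c)"
    using \<open>c < X\<close> assms(1)
    by (simp add: clip_eq_scaleR X_def[symmetric] r_def q_def power2_norm_eq_inner inner_add_right)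
  finally show ?thesis
    by (simp add: r_def q_def)
qed

lemma inner_clip_add_ge:
  assumes "c > 0" and "norm w < c / 4"
  shows "norm v * min (norm v) (3 / 4 * c) + inner v w \<le> inner v (clip (v + w) c)"
proof (cases "norm (v + w) \<le> c")
  case True
  then have "clip (v + w) c = v + w"
    by (cases "v + w = 0") (auto simp: clip_def min_def field_simps)
  then show ?thesis
    by (simp add: inner_add_right mult_left_mono power2_norm_eq_inner[symmetric] power2_eq_square)
next
  case False
  then have "3 / 4 * c \<le> norm v"
    using assms(2) norm_triangle_ineq[of v w] by linarith
  then show ?thesis
    using inner_clip_add_ge_outside_ball[OF assms] False by (simp add: min_absorb2 mult.commute)
qed

section \<open>The standard Gaussian measure\<close>

lemma space_std_gauss [simp]: "space std_gauss = UNIV"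
  and sets_std_gauss [simp]: "sets std_gauss = sets borel"
  by (simp_all add: std_gauss_def)

lemma measurable_std_gauss [simp]: "measurable std_gauss N = measurable borel N"
  by (rule measurable_cong_sets) simp_all

lemma std_gauss_density_measurable [measurable]: "std_gauss_density \<in> borel_measurable borel"
  unfolding std_gauss_density_def[abs_def] by measurable

lemma std_gauss_density_nonneg: "0 \<le> std_gauss_density x"
  by (simp add: std_gauss_density_def)

lemma std_gauss_density_uminus: "std_gauss_density (- x) = std_gauss_density x"
  by (simp add: std_gauss_density_def)

lemma std_gauss_density_diff:
  "std_gauss_density (z - y) = std_gauss_density z * exp (inner z y - (norm y)\<^sup>2 / 2)"
proof -
  have "- (norm (z - y))\<^sup>2 / 2 = - (norm z)\<^sup>2 / 2 + (inner z y - (norm y)\<^sup>2 / 2)"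
    by (simp add: power2_norm_eq_inner inner_diff_left inner_diff_right inner_commute field_simps)
  then have "exp (- (norm (z - y))\<^sup>2 / 2) = exp (- (norm z)\<^sup>2 / 2) * exp (inner z y - (norm y)\<^sup>2 / 2)"
    by (simp only: exp_add)
  then show ?thesis
    by (simp add: std_gauss_density_def)
qed

lemma integral_std_gauss:
  fixes F :: "'a::euclidean_space \<Rightarrow> real"
  assumes [measurable]: "F \<in> borel_measurable borel"
  shows "(\<integral>z. F z \<partial>std_gauss) = (\<integral>z. std_gauss_density z * F z \<partial>lborel)"
  unfolding std_gauss_def by (simp add: integral_density std_gauss_density_nonneg)

lemma nn_integral_exp_neg_norm_sq_finite:
  "(\<integral>\<^sup>+ z. ennreal (exp (- (norm z)\<^sup>2 / 4)) \<partial>(lborel :: 'a::euclidean_space measure)) < \<infinity>"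
proof -
  have "exp (- (x\<^sup>2) / 4) = sqrt (4 * pi) * normal_density 0 (sqrt 2) x" for x :: real
    by (simp add: normal_density_def real_sqrt_mult)
  then have "integrable lborel (\<lambda>x::real. exp (- (x\<^sup>2) / 4))"
    by (simp add: integrable_normal_density)
  from integrableD(2)[OF this]
  have finite_1d: "(\<integral>\<^sup>+ x. ennreal (exp (- (x\<^sup>2) / 4)) \<partial>lborel) < \<infinity>"
    by (simp add: less_top)
  have factor: "ennreal (exp (- (norm z)\<^sup>2 / 4)) = (\<Prod>b\<in>Basis. ennreal (exp (- (z \<bullet> b)\<^sup>2 / 4)))"
    for z :: 'a
  proof -
    have "(norm z)\<^sup>2 = (\<Sum>b\<in>Basis. (z \<bullet> b)\<^sup>2)"
      unfolding power2_norm_eq_inner by (subst euclidean_inner) (simp add: power2_eq_square)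
    then have "- (norm z)\<^sup>2 / 4 = (\<Sum>b\<in>Basis. - (z \<bullet> b)\<^sup>2 / 4)"
      by (simp add: sum_divide_distrib sum_negf)
    then show ?thesis
      by (simp add: exp_sum prod_ennreal)
  qed
  have "(\<integral>\<^sup>+ z. ennreal (exp (- (norm z)\<^sup>2 / 4)) \<partial>(lborel :: 'a measure))
      = (\<Prod>b\<in>(Basis :: 'a set). \<integral>\<^sup>+ x. ennreal (exp (- (x\<^sup>2) / 4)) \<partial>lborel)"
    unfolding factor by (rule nn_integral_lborel_prod) auto
  also have "\<dots> < \<infinity>"
    using finite_1d by (simp add: power_less_top_ennreal)
  finally show ?thesis .
qed

text \<open>The weight exp (2 |z|) dominates all integrands below: constants, |z|, and the
  second-order remainder of the Cameron--Martin density.\<close>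

lemma integrable_std_gauss_exp_norm:
  "integrable (std_gauss :: 'a::euclidean_space measure) (\<lambda>z. exp (2 * norm z))"
proof -
  define K where "K = (2 * pi) powr (- real DIM('a) / 2) * exp 4"
  have "integrable lborel (\<lambda>z::'a. exp (- (norm z)\<^sup>2 / 4))"
    by (intro integrableI_nonneg nn_integral_exp_neg_norm_sq_finite) auto
  then have dominant: "integrable lborel (\<lambda>z::'a. K * exp (- (norm z)\<^sup>2 / 4))"
    by simp
  have bound: "norm (std_gauss_density z * exp (2 * norm z)) \<le> norm (K * exp (- (norm z)\<^sup>2 / 4))"
    for z :: 'a
  proof -
    \<comment> \<open>2 t - t^2/2 = 4 - t^2/4 - (t/2 - 2)^2\<close>
    have "exp (2 * norm z) * exp (- (norm z)\<^sup>2 / 2) \<le> exp 4 * exp (- (norm z)\<^sup>2 / 4)"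
      unfolding exp_add[symmetric] exp_le_cancel_iff
      using zero_le_power2[of "norm z / 2 - 2"] by (simp add: power2_eq_square field_simps)
    then have "std_gauss_density z * exp (2 * norm z) \<le> K * exp (- (norm z)\<^sup>2 / 4)"
      unfolding std_gauss_density_def K_def
      using mult_left_mono[of _ _ "(2 * pi) powr (- real DIM('a) / 2)"] by (simp add: ac_simps)
    moreover have "0 \<le> K"
      by (simp add: K_def)
    ultimately show ?thesis
      by (simp add: abs_mult std_gauss_density_nonneg)
  qed
  have "integrable lborel (\<lambda>z::'a. std_gauss_density z * exp (2 * norm z))"
    by (rule Bochner_Integration.integrable_bound[OF dominant _ AE_I2[OF bound]]) measurable
  then show ?thesis
    unfolding std_gauss_def by (simp add: integrable_density std_gauss_density_nonneg)
qed

interpretation std_gauss: finite_measure "std_gauss :: 'a::euclidean_space measure"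
proof
  have "emeasure (std_gauss :: 'a measure) (space std_gauss) = (\<integral>\<^sup>+ z. 1 \<partial>(std_gauss :: 'a measure))"
    by simp
  also have "\<dots> \<le> (\<integral>\<^sup>+ z. ennreal (norm (exp (2 * norm z))) \<partial>(std_gauss :: 'a measure))"
    by (intro nn_integral_mono) simp
  also have "\<dots> < \<infinity>"
    using integrableD(2)[OF integrable_std_gauss_exp_norm] by (simp add: less_top)
  finally show "emeasure (std_gauss :: 'a measure) (space std_gauss) \<noteq> \<infinity>"
    by simp
qed

lemma integrable_std_gauss_dominated:
  fixes g :: "'a::euclidean_space \<Rightarrow> 'b::{banach, second_countable_topology}"
  assumes [measurable]: "g \<in> borel_measurable borel"
    and bound: "\<And>z. norm (g z) \<le> B * exp (2 * norm z)"
  shows "integrable std_gauss g"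
proof (rule Bochner_Integration.integrable_bound)
  show "integrable std_gauss (\<lambda>z. B * exp (2 * norm z))"
    by (intro integrable_mult_right integrable_std_gauss_exp_norm)
  show "AE z in std_gauss. norm (g z) \<le> norm (B * exp (2 * norm z))"
    unfolding real_norm_def by (rule AE_I2, rule order_trans[OF bound abs_ge_self])
qed simp

lemma abs_integral_std_gauss_le:
  fixes g :: "'a::euclidean_space \<Rightarrow> real"
  assumes [measurable]: "g \<in> borel_measurable borel"
    and bound: "\<And>z. \<bar>g z\<bar> \<le> B * exp (2 * norm z)"
  shows "\<bar>\<integral>z. g z \<partial>std_gauss\<bar> \<le> B * (\<integral>z. exp (2 * norm z) \<partial>(std_gauss :: 'a measure))"
proof -
  have "\<bar>\<integral>z. g z \<partial>std_gauss\<bar> \<le> (\<integral>z. \<bar>g z\<bar> \<partial>std_gauss)"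
    by (rule integral_abs_bound)
  also have "\<dots> \<le> (\<integral>z. B * exp (2 * norm z) \<partial>(std_gauss :: 'a measure))"
    using bound by (intro Bochner_Integration.integral_mono integrable_abs integrable_mult_right
        integrable_std_gauss_exp_norm integrable_std_gauss_dominated[where B = B]) simp_all
  finally show ?thesis
    by simp
qed

lemma integral_std_gauss_shift:
  fixes F :: "'a::euclidean_space \<Rightarrow> real"
  assumes [measurable]: "F \<in> borel_measurable borel"
  shows "(\<integral>z. F (y + z) \<partial>std_gauss) = (\<integral>z. exp (inner z y - (norm y)\<^sup>2 / 2) * F z \<partial>std_gauss)"
proof -
  have "(\<integral>z. F (y + z) \<partial>std_gauss) = (\<integral>z. std_gauss_density z * F (y + z) \<partial>lborel)"
    by (rule integral_std_gauss) measurable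
  also have "\<dots> = (\<integral>z. std_gauss_density (z - y) * F z \<partial>distr lborel borel ((+) y))"
    by (subst integral_distr) simp_all
  also have "\<dots> = (\<integral>z. std_gauss_density (z - y) * F z \<partial>lborel)"
    by (simp add: lborel_distr_plus)
  also have "\<dots> = (\<integral>z. exp (inner z y - (norm y)\<^sup>2 / 2) * F z \<partial>std_gauss)"
    by (subst integral_std_gauss) (simp_all add: std_gauss_density_diff mult.assoc)
  finally show ?thesis .
qed

lemma distr_lborel_uminus: "distr lborel borel uminus = (lborel :: 'a::euclidean_space measure)"
  using lborel_affine[of "-1" "0 :: 'a"] by (simp add: density_1)

lemma distr_std_gauss_uminus: "distr std_gauss borel uminus = (std_gauss :: 'a::euclidean_space measure)"
proof -
  have "distr std_gauss borel uminus
      = distr (density lborel (\<lambda>x. ennreal (std_gauss_density (- x)))) borel (uminus :: 'a \<Rightarrow> 'a)"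
    by (simp add: std_gauss_def std_gauss_density_uminus)
  also have "\<dots> = density (distr lborel borel uminus) (\<lambda>x. ennreal (std_gauss_density x))"
    by (rule density_distr[symmetric]) simp_all
  finally show ?thesis
    by (simp add: distr_lborel_uminus std_gauss_def)
qed

lemma integral_std_gauss_uminus:
  fixes F :: "'a::euclidean_space \<Rightarrow> real"
  assumes [measurable]: "F \<in> borel_measurable borel"
  shows "(\<integral>z. F (- z) \<partial>std_gauss) = (\<integral>z. F z \<partial>std_gauss)"
  using integral_distr[of uminus std_gauss borel F] by (simp add: distr_std_gauss_uminus)

section \<open>Gaussian smoothing of bounded functions\<close>

lemma abs_exp_minus_one_minus_le:
  fixes b :: real
  shows "\<bar>exp b - 1 - b\<bar> \<le> b\<^sup>2 * exp \<bar>b\<bar> / 2"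
proof -
  obtain \<theta> where "\<bar>\<theta>\<bar> \<le> \<bar>b\<bar>" and "exp b = (\<Sum>m<2. b ^ m / fact m) + exp \<theta> / fact 2 * b ^ 2"
    using Maclaurin_exp_le[of b 2] by blast
  then have "\<bar>exp b - 1 - b\<bar> = exp \<theta> * b\<^sup>2 / 2"
    by (simp add: numeral_2_eq_2)
  also have "\<dots> \<le> exp \<bar>b\<bar> * b\<^sup>2 / 2"
    using \<open>\<bar>\<theta>\<bar> \<le> \<bar>b\<bar>\<close> by (intro divide_right_mono mult_right_mono) auto
  finally show ?thesis
    by (simp add: mult.commute)
qed

lemma quadratic_exp_le_exp_double:
  fixes T :: real
  assumes "0 \<le> T"
  shows "(3 * T\<^sup>2 + 3 / 4) * exp T + 1 / 2 \<le> 8 * exp (2 * T)"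
proof -
  define E where "E = exp T"
  have "exp (2 * T) = E * E"
    unfolding E_def exp_add[symmetric] by simp
  have "T\<^sup>2 \<le> 2 * E" and "1 \<le> E"
    using exp_lower_Taylor_quadratic[OF assms] assms by (simp_all add: E_def)
  have "T\<^sup>2 * E \<le> 2 * (E * E)"
    using mult_right_mono[OF \<open>T\<^sup>2 \<le> 2 * E\<close>, of E] \<open>1 \<le> E\<close> by (simp add: mult.assoc)
  moreover have "E \<le> E * E"
    using mult_right_mono[OF \<open>1 \<le> E\<close>, of E] \<open>1 \<le> E\<close> by simp
  moreover have "(3 * T\<^sup>2 + 3 / 4) * E = 3 * (T\<^sup>2 * E) + 3 / 4 * E"
    by (simp add: algebra_simps)
  ultimately show ?thesis
    unfolding \<open>exp (2 * T) = E * E\<close> E_def[symmetric] using \<open>1 \<le> E\<close> by linarith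
qed

lemma abs_exp_shift_remainder_le:
  fixes a s T :: real
  assumes "\<bar>a\<bar> \<le> T * s" and "0 \<le> s" and "s \<le> 1" and "0 \<le> T"
  shows "\<bar>exp (a - s\<^sup>2 / 2) - 1 - a\<bar> \<le> 8 * s\<^sup>2 * exp (2 * T)"
proof -
  define b where "b = a - s\<^sup>2 / 2"
  define E where "E = exp T"
  have "\<bar>a\<bar> \<le> T"
    using assms mult_left_le[of s T] by linarith
  moreover have "s\<^sup>2 \<le> 1"
    using assms by (simp add: power_le_one)
  ultimately have "\<bar>b\<bar> \<le> T + 1"
    by (simp add: b_def abs_le_iff) (use zero_le_power2[of s] in linarith)
  then have "exp \<bar>b\<bar> \<le> exp T * exp 1"
    by (simp flip: exp_add)
  also have "\<dots> \<le> exp T * 3"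
    using exp_le by simp
  finally have exp_b: "exp \<bar>b\<bar> \<le> 3 * E"
    by (simp add: E_def)
  have b_sq: "b\<^sup>2 \<le> s\<^sup>2 * (2 * T\<^sup>2 + 1 / 2)"
  proof -
    have "a\<^sup>2 \<le> (T * s)\<^sup>2"
      using assms by (simp add: abs_le_square_iff[symmetric] abs_mult)
    moreover have "s\<^sup>2 * s\<^sup>2 \<le> s\<^sup>2"
      using \<open>s\<^sup>2 \<le> 1\<close> mult_left_le[of "s\<^sup>2" "s\<^sup>2"] by simp
    moreover have "b\<^sup>2 \<le> 2 * a\<^sup>2 + s\<^sup>2 * s\<^sup>2 / 2"
      using zero_le_power2[of "a + s\<^sup>2 / 2"] by (simp add: b_def power2_eq_square algebra_simps)
    ultimately show ?thesis
      by (simp add: power_mult_distrib algebra_simps)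
  qed
  have "\<bar>exp b - 1 - b\<bar> \<le> b\<^sup>2 * exp \<bar>b\<bar> / 2"
    by (rule abs_exp_minus_one_minus_le)
  also have "\<dots> \<le> s\<^sup>2 * (2 * T\<^sup>2 + 1 / 2) * (3 * E) / 2"
    using b_sq exp_b by (intro divide_right_mono mult_mono) auto
  finally have "\<bar>exp b - 1 - b\<bar> + s\<^sup>2 / 2 \<le> s\<^sup>2 * ((3 * T\<^sup>2 + 3 / 4) * E + 1 / 2)"
    by (simp add: algebra_simps)
  also have "\<dots> \<le> s\<^sup>2 * (8 * exp (2 * T))"
    using quadratic_exp_le_exp_double[OF assms(4)] by (intro mult_left_mono) (simp_all add: E_def)
  finally show ?thesis
    using abs_triangle_ineq[of "exp b - 1 - b" "- (s\<^sup>2 / 2)"] by (simp add: b_def)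
qed

lemma one_le_exp_two_norm: "1 \<le> exp (2 * norm z)" and norm_le_exp_two_norm: "norm z \<le> exp (2 * norm z)"
  using exp_ge_add_one_self[of "2 * norm z"] norm_ge_zero[of z] by linarith+

lemma abs_inner_le_exp_two_norm: "\<bar>inner z y\<bar> \<le> norm y * exp (2 * norm z)"
  using Cauchy_Schwarz_ineq2[of z y] mult_right_mono[OF norm_le_exp_two_norm norm_ge_zero, of z y]
  by (simp add: mult.commute)

lemma std_gauss_smoothing_taylor_near:
  fixes g :: "'a::euclidean_space \<Rightarrow> real"
  assumes g_meas [measurable]: "g \<in> borel_measurable borel" and g_bound: "\<And>u. \<bar>g u\<bar> \<le> M"
    and "norm y \<le> 1"
  shows "\<bar>(\<integral>z. g (y + z) \<partial>std_gauss) - (\<integral>z. g z \<partial>std_gauss) - (\<integral>z. g z * inner z y \<partial>std_gauss)\<bar>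
    \<le> 8 * (norm y)\<^sup>2 * M * (\<integral>z. exp (2 * norm z) \<partial>(std_gauss :: 'a measure))"
proof -
  define s where "s = norm y"
  define E where "E z = exp (inner z y - s\<^sup>2 / 2)" for z :: 'a
  have "0 \<le> M"
    using g_bound[of 0] abs_ge_zero order_trans by blast
  have E_le: "E z \<le> exp (2 * norm z)" for z
  proof -
    have "inner z y \<le> norm z * 1"
      using norm_cauchy_schwarz[of z y] mult_left_mono[OF assms(3), of "norm z"] by simp
    then show ?thesis
      by (simp add: E_def) (use zero_le_power2[of s] norm_ge_zero[of z] in linarith)
  qed
  have remainder: "\<bar>g z * (E z - 1 - inner z y)\<bar> \<le> 8 * s\<^sup>2 * M * exp (2 * norm z)" for z
  proof -
    have "\<bar>E z - 1 - inner z y\<bar> \<le> 8 * s\<^sup>2 * exp (2 * norm z)"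
      unfolding E_def using Cauchy_Schwarz_ineq2[of z y] assms(3)
      by (intro abs_exp_shift_remainder_le) (simp_all add: s_def)
    then have "\<bar>g z\<bar> * \<bar>E z - 1 - inner z y\<bar> \<le> M * (8 * s\<^sup>2 * exp (2 * norm z))"
      by (rule mult_mono[OF g_bound _ \<open>0 \<le> M\<close> abs_ge_zero])
    then show ?thesis
      by (simp add: abs_mult mult_ac)
  qed
  have "integrable std_gauss (\<lambda>z. E z * g z)"
  proof (rule integrable_std_gauss_dominated)
    show "norm (E z * g z) \<le> M * exp (2 * norm z)" for z
      using mult_mono[OF E_le g_bound] \<open>0 \<le> M\<close> by (simp add: E_def abs_mult mult.commute)
  qed (simp add: E_def)
  moreover have "integrable std_gauss g"
  proof (rule integrable_std_gauss_dominated[OF g_meas])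
    show "norm (g z) \<le> M * exp (2 * norm z)" for z
      using g_bound[of z] mult_left_mono[OF one_le_exp_two_norm \<open>0 \<le> M\<close>, of z] by simp
  qed
  moreover have "integrable std_gauss (\<lambda>z. g z * inner z y)"
  proof (rule integrable_std_gauss_dominated)
    show "norm (g z * inner z y) \<le> M * s * exp (2 * norm z)" for z
      using mult_mono[OF g_bound abs_inner_le_exp_two_norm \<open>0 \<le> M\<close> abs_ge_zero]
      by (simp add: s_def abs_mult mult_ac)
  qed simp
  ultimately have "(\<integral>z. g (y + z) \<partial>std_gauss) - (\<integral>z. g z \<partial>std_gauss) - (\<integral>z. g z * inner z y \<partial>std_gauss)
      = (\<integral>z. g z * (E z - 1 - inner z y) \<partial>std_gauss)"
    unfolding integral_std_gauss_shift[OF g_meas] by (simp add: E_def s_def algebra_simps)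
  also have "\<bar>\<dots>\<bar> \<le> 8 * s\<^sup>2 * M * (\<integral>z. exp (2 * norm z) \<partial>(std_gauss :: 'a measure))"
    by (rule abs_integral_std_gauss_le[OF _ remainder]) (simp add: E_def)
  finally show ?thesis
    by (simp add: s_def)
qed

lemma std_gauss_smoothing_taylor:
  fixes g :: "'a::euclidean_space \<Rightarrow> real"
  assumes g_meas [measurable]: "g \<in> borel_measurable borel" and g_bound: "\<And>u. \<bar>g u\<bar> \<le> M"
  shows "\<bar>(\<integral>z. g (y + z) \<partial>std_gauss) - (\<integral>z. g z \<partial>std_gauss) - inner (\<integral>z. g z *\<^sub>R z \<partial>std_gauss) y\<bar>
    \<le> 8 * M * (\<integral>z. exp (2 * norm z) \<partial>(std_gauss :: 'a measure)) * (norm y)\<^sup>2"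
proof -
  define J where "J = (\<integral>z. exp (2 * norm z) \<partial>(std_gauss :: 'a measure))"
  define L where "L = (\<integral>z. g z * inner z y \<partial>std_gauss)"
  have "0 \<le> M"
    using g_bound[of 0] abs_ge_zero order_trans by blast
  have "0 \<le> J"
    unfolding J_def by (rule integral_nonneg_AE) simp
  have "integrable std_gauss (\<lambda>z. g z *\<^sub>R z)"
  proof (rule integrable_std_gauss_dominated)
    show "norm (g z *\<^sub>R z) \<le> M * exp (2 * norm z)" for z :: 'a
      unfolding norm_scaleR by (rule mult_mono[OF g_bound norm_le_exp_two_norm \<open>0 \<le> M\<close> norm_ge_zero])
  qed simp
  then have linear_term: "inner (\<integral>z. g z *\<^sub>R z \<partial>std_gauss) y = L"
    using integral_inner_left[of y std_gauss "\<lambda>z. g z *\<^sub>R z"] by (simp add: L_def)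
  show ?thesis
  proof (cases "norm y \<le> 1")
    case True
    then show ?thesis
      using std_gauss_smoothing_taylor_near[OF g_meas g_bound True] by (simp add: linear_term L_def mult_ac)
  next
    case False
    have g_dom: "\<bar>g u\<bar> \<le> M * exp (2 * norm z)" for u z
      using g_bound[of u] mult_left_mono[OF one_le_exp_two_norm \<open>0 \<le> M\<close>, of z] by simp
    have "\<bar>\<integral>z. g (y + z) \<partial>std_gauss\<bar> \<le> M * J" and "\<bar>\<integral>z. g z \<partial>std_gauss\<bar> \<le> M * J"
      unfolding J_def by (rule abs_integral_std_gauss_le, simp, rule g_dom)+
    moreover have "\<bar>L\<bar> \<le> (M * norm y) * J"
      unfolding L_def J_def
    proof (rule abs_integral_std_gauss_le)
      show "\<bar>g z * inner z y\<bar> \<le> M * norm y * exp (2 * norm z)" for z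
        using mult_mono[OF g_bound abs_inner_le_exp_two_norm \<open>0 \<le> M\<close> abs_ge_zero]
        by (simp add: abs_mult mult_ac)
    qed simp
    moreover have "M * J * 1 \<le> M * J * norm y" and "M * J * norm y \<le> M * J * (norm y)\<^sup>2"
    proof -
      have "norm y * 1 \<le> norm y * norm y"
        using False by (intro mult_left_mono) auto
      then show "M * J * 1 \<le> M * J * norm y" and "M * J * norm y \<le> M * J * (norm y)\<^sup>2"
        using False \<open>0 \<le> M\<close> \<open>0 \<le> J\<close> by (intro mult_left_mono; simp add: power2_eq_square)+
    qed
    ultimately have "\<bar>(\<integral>z. g (y + z) \<partial>std_gauss) - (\<integral>z. g z \<partial>std_gauss) - L\<bar> \<le> 8 * (M * J * (norm y)\<^sup>2)"
      by (simp add: abs_le_iff mult_ac)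
    then show ?thesis
      by (simp add: linear_term J_def mult_ac)
  qed
qed

section \<open>The expected clipped gradient\<close>

lemma integral_inner_clip_std_gauss_ge:
  fixes v :: "'a::euclidean_space"
  assumes "c > 0"
  shows "norm v * min (norm v) (3 / 4 * c) * measure (std_gauss :: 'a measure) {z. norm (k *\<^sub>R z) < c / 4}
    \<le> (\<integral>z. inner v (clip (v + k *\<^sub>R z) c) \<partial>std_gauss)"
proof -
  define f where "f z = inner v (clip (v + k *\<^sub>R z) c)" for z :: 'a
  define m where "m = norm v * min (norm v) (3 / 4 * c)"
  define E where "E = {z :: 'a. norm (k *\<^sub>R z) < c / 4}"
  have f_meas [measurable]: "f \<in> borel_measurable borel"
    unfolding f_def by measurable
  have "E \<in> sets borel"
    unfolding E_def by measurable
  have f_int: "integrable std_gauss f" "integrable std_gauss (\<lambda>z. f (- z))"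
    using abs_inner_clip_le[OF assms]
    by (auto intro!: std_gauss.integrable_const_bound[where B = "norm v * c"] AE_I2 simp: f_def)
  \<comment> \<open>Pair z with -z: on E both halves gain m and the linear terms cancel; off E the pair sum is
    nonnegative by monotonicity of clipping.\<close>
  have pointwise: "2 * m * indicator E z \<le> f z + f (- z)" for z
  proof (cases "z \<in> E")
    case True
    then have "norm (k *\<^sub>R z) < c / 4" "norm (- (k *\<^sub>R z)) < c / 4"
      by (simp_all add: E_def)
    then show ?thesis
      using True inner_clip_add_ge[OF assms, of "k *\<^sub>R z" v] inner_clip_add_ge[OF assms, of "- (k *\<^sub>R z)" v]
      by (simp add: f_def m_def)
  next
    case False
    then show ?thesis
      using inner_clip_add_diff_nonneg[OF assms, of v "k *\<^sub>R z"] by (simp add: f_def)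
  qed
  have "2 * (m * measure std_gauss E) = (\<integral>z. 2 * m * indicator E z \<partial>std_gauss)"
    using \<open>E \<in> sets borel\<close> by simp
  also have "\<dots> \<le> (\<integral>z. f z + f (- z) \<partial>std_gauss)"
    using f_int \<open>E \<in> sets borel\<close> pointwise
    by (intro Bochner_Integration.integral_mono integrable_mult_right integrable_real_indicator
        Bochner_Integration.integrable_add) (simp_all add: std_gauss.emeasure_real less_top[symmetric])
  also have "\<dots> = 2 * (\<integral>z. f z \<partial>std_gauss)"
    using f_int integral_std_gauss_uminus[OF f_meas] by simp
  finally show ?thesis
    by (simp add: f_def m_def E_def)
qed

lemma prob_space_density_zero_mean_finite_var:
  "zero_mean_finite_var_density p \<Longrightarrow> prob_space (density lborel (\<lambda>x. ennreal (p x)))"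
  by (rule prob_spaceI) (simp add: zero_mean_finite_var_density_def emeasure_density)

lemma integral_ge_quadratic_minorant:
  fixes N :: "'a::euclidean_space measure" and h :: "'a \<Rightarrow> real"
  assumes "prob_space N" and "integrable N h"
    and "integrable N (\<lambda>x. x)" and "(\<integral>x. x \<partial>N) = 0" and "integrable N (\<lambda>x. (norm x)\<^sup>2)"
    and minorant: "\<And>x. b + inner a x - K * (norm x)\<^sup>2 \<le> h x"
  shows "b - K * (\<integral>x. (norm x)\<^sup>2 \<partial>N) \<le> (\<integral>x. h x \<partial>N)"
proof -
  interpret prob_space N
    by fact
  have "integrable N (\<lambda>x. b + inner a x - K * (norm x)\<^sup>2)"
    using assms(3,5) by simp
  then have "(\<integral>x. b + inner a x - K * (norm x)\<^sup>2 \<partial>N) \<le> (\<integral>x. h x \<partial>N)"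
    using assms(2) minorant by (rule Bochner_Integration.integral_mono)
  moreover have "(\<integral>x. b + inner a x - K * (norm x)\<^sup>2 \<partial>N)
      = b + inner a (\<integral>x. x \<partial>N) - K * (\<integral>x. (norm x)\<^sup>2 \<partial>N)"
    using assms(3,5) by (simp add: prob_space)
  ultimately show ?thesis
    using assms(4) by simp
qed

lemma integral_pair_std_gauss:
  fixes N :: "'a::euclidean_space measure" and F :: "'a \<times> 'b::euclidean_space \<Rightarrow> real"
  assumes "finite_measure N" and sets_N: "sets N = sets borel"
    and F_meas: "F \<in> borel_measurable borel" and F_bound: "\<And>w. \<bar>F w\<bar> \<le> B"
  shows "integrable N (\<lambda>x. \<integral>z. F (x, z) \<partial>std_gauss)"
    and "(\<integral>w. F w \<partial>(N \<Otimes>\<^sub>M std_gauss)) = (\<integral>x. (\<integral>z. F (x, z) \<partial>std_gauss) \<partial>N)"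
proof -
  interpret N: finite_measure N
    by fact
  interpret pair_sigma_finite N std_gauss
    by unfold_locales
  interpret NG: finite_measure "N \<Otimes>\<^sub>M std_gauss"
    by (rule finite_measure_pair_measure) unfold_locales
  have "sets (N \<Otimes>\<^sub>M std_gauss) = sets (borel \<Otimes>\<^sub>M (borel :: 'b measure))"
    using sets_N by (intro sets_pair_measure_cong) simp_all
  also have "\<dots> = sets (borel :: ('a \<times> 'b) measure)"
    by (simp only: borel_prod)
  finally have "F \<in> borel_measurable (N \<Otimes>\<^sub>M std_gauss)"
    using F_meas measurable_cong_sets[OF _ refl] by blast
  then have "integrable (N \<Otimes>\<^sub>M std_gauss) F"
    using F_bound by (intro NG.integrable_const_bound[where B = B]) simp_all
  then show "integrable N (\<lambda>x. \<integral>z. F (x, z) \<partial>std_gauss)"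
    and "(\<integral>w. F w \<partial>(N \<Otimes>\<^sub>M std_gauss)) = (\<integral>x. (\<integral>z. F (x, z) \<partial>std_gauss) \<partial>N)"
    by (simp_all add: integrable_fst' integral_fst')
qed

lemma std_gauss_inner_clip_quadratic_minorant:
  fixes v :: "'a::euclidean_space"
  assumes "c > 0" and "k > 0"
  obtains a where "\<And>x. (\<integral>z. inner v (clip (v + k *\<^sub>R z) c) \<partial>std_gauss) + inner a x
      - 8 * (norm v * c) * (\<integral>z. exp (2 * norm z) \<partial>(std_gauss :: 'a measure)) / k\<^sup>2 * (norm x)\<^sup>2
    \<le> (\<integral>z. inner v (clip (v + x + k *\<^sub>R z) c) \<partial>std_gauss)"
proof (rule that)
  fix x :: 'a
  define a where "a = (\<integral>z. inner v (clip (v + k *\<^sub>R z) c) *\<^sub>R z \<partial>(std_gauss :: 'a measure))"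
  have "\<bar>(\<integral>z. inner v (clip (v + x + k *\<^sub>R z) c) \<partial>std_gauss) - (\<integral>z. inner v (clip (v + k *\<^sub>R z) c) \<partial>std_gauss)
      - inner ((1 / k) *\<^sub>R a) x\<bar>
    \<le> 8 * (norm v * c) * (\<integral>z. exp (2 * norm z) \<partial>(std_gauss :: 'a measure)) / k\<^sup>2 * (norm x)\<^sup>2"
    using std_gauss_smoothing_taylor[where g = "\<lambda>u. inner v (clip (v + k *\<^sub>R u) c)" and M = "norm v * c"
        and y = "(1 / k) *\<^sub>R x", OF _ abs_inner_clip_le[OF assms(1)]] \<open>k > 0\<close>
    by (simp add: a_def scaleR_add_right add.assoc power_divide)
  then show "(\<integral>z. inner v (clip (v + k *\<^sub>R z) c) \<partial>std_gauss) + inner ((1 / k) *\<^sub>R a) x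
      - 8 * (norm v * c) * (\<integral>z. exp (2 * norm z) \<partial>(std_gauss :: 'a measure)) / k\<^sup>2 * (norm x)\<^sup>2
    \<le> (\<integral>z. inner v (clip (v + x + k *\<^sub>R z) c) \<partial>std_gauss)"
    unfolding abs_le_iff by linarith
qed

lemma integral_inner_clip_noisy_ge:
  fixes v :: "'a::euclidean_space"
  assumes "c > 0" and "k > 0" and p: "zero_mean_finite_var_density p"
  shows "norm v * min (norm v) (3 / 4 * c) * measure (std_gauss :: 'a measure) {z. norm (k *\<^sub>R z) < c / 4}
      - 8 * (norm v * c) * (\<integral>z. exp (2 * norm z) \<partial>(std_gauss :: 'a measure))
        * (\<integral>x. (norm x)\<^sup>2 \<partial>density lborel (\<lambda>x. ennreal (p x))) / k\<^sup>2
    \<le> (\<integral>w. inner v (clip (v + fst w + k *\<^sub>R snd w) c) \<partial>(density lborel (\<lambda>x. ennreal (p x)) \<Otimes>\<^sub>M std_gauss))"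
proof -
  define N where "N = density lborel (\<lambda>x. ennreal (p x))"
  define H where "H x = (\<integral>z. inner v (clip (v + x + k *\<^sub>R z) c) \<partial>std_gauss)" for x
  have N: "prob_space N" "sets N = sets borel" "integrable N (\<lambda>x. x)" "(\<integral>x. x \<partial>N) = 0"
      "integrable N (\<lambda>x. (norm x)\<^sup>2)"
    using p prob_space_density_zero_mean_finite_var[OF p] by (simp_all add: N_def zero_mean_finite_var_density_def)
  have "(\<lambda>w::'a \<times> 'a. inner v (clip (v + fst w + k *\<^sub>R snd w) c)) \<in> borel_measurable borel"
    unfolding borel_prod[symmetric] by measurable
  from integral_pair_std_gauss[OF prob_space.axioms(1)[OF N(1)] N(2) this abs_inner_clip_le[OF assms(1)]]
  have fubini: "integrable N H"
      "(\<integral>w. inner v (clip (v + fst w + k *\<^sub>R snd w) c) \<partial>(N \<Otimes>\<^sub>M std_gauss)) = (\<integral>x. H x \<partial>N)"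
    by (simp_all add: H_def[abs_def])
  obtain a where "\<And>x. H 0 + inner a x
      - 8 * (norm v * c) * (\<integral>z. exp (2 * norm z) \<partial>(std_gauss :: 'a measure)) / k\<^sup>2 * (norm x)\<^sup>2 \<le> H x"
    using std_gauss_inner_clip_quadratic_minorant[OF assms(1,2), of v] by (auto simp: H_def)
  from integral_ge_quadratic_minorant[OF N(1) fubini(1) N(3-5) this]
    integral_inner_clip_std_gauss_ge[OF assms(1), of v k] fubini(2)
  show ?thesis
    by (simp add: H_def N_def)
qed

theorem theorem6:
  fixes c :: real and v :: "'a::euclidean_space"
  assumes "c > 0"
  shows "\<exists>C. \<forall>(k::real) (p::'a \<Rightarrow> real). k > 0 \<longrightarrow> zero_mean_finite_var_density p \<longrightarrow>
    (\<integral> z. inner v (clip (v + fst z + k *\<^sub>R snd z) c)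
        \<partial>(density lborel (\<lambda>x. ennreal (p x)) \<Otimes>\<^sub>M std_gauss))
    \<ge> norm v * min (norm v) (3 / 4 * c) * measure (std_gauss :: 'a measure) {z. norm (k *\<^sub>R z) < c / 4}
      - C * (\<integral> x. (norm x)\<^sup>2 \<partial>density lborel (\<lambda>x. ennreal (p x))) / k\<^sup>2"
  using integral_inner_clip_noisy_ge[OF assms]
  by (intro exI[of _ "8 * (norm v * c) * (\<integral>z. exp (2 * norm z) \<partial>(std_gauss :: 'a measure))"] allI impI)

end
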